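(* Let $k>1$ and let $\mathcal P$ be any $k$-pattern in $\mathbb R$ under direct similarity. If $n$ is a positive integer and $r$ is the remainder when $n$ is divided by $k-1$, then $S_{\mathcal P}(n)\le (n-r)(n+r-k+1)/(2k-2)$.
   Context: A direct similarity of $\mathbb R$ is a map $x\mapsto ax+b$ with $a>0$, $b\in\mathbb R$. A $k$-pattern in $\mathbb R$ under direct similarity is the set $\mathcal P$ of all images of a fixed $k$-element set $P_0\subseteq\mathbb R$ under direct similarities. For finite $V\subseteq\mathbb R$, $S_{\mathcal P}(V)=|\{P\subseteq V:P\in\mathcal P\}|$ and $S_{\mathcal P}(n)=\max\{S_{\mathcal P}(V):V\subseteq\mathbb R,\ |V|=n\}$. *)

theory Defs
  imports Complex_Main
begin

definition direct_similarity :: "(real \<Rightarrow> real) \<Rightarrow> bool" where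
  "direct_similarity f \<longleftrightarrow> (\<exists>a b. a > 0 \<and> f = (\<lambda>x. a * x + b))"

definition pattern :: "real set \<Rightarrow> real set set" where
  "pattern P0 = {f ` P0 | f. direct_similarity f}"

definition S_set :: "real set set \<Rightarrow> real set \<Rightarrow> nat" where
  "S_set \<P> V = card {P. P \<subseteq> V \<and> P \<in> \<P>}"

definition S_num :: "real set set \<Rightarrow> nat \<Rightarrow> nat" where
  "S_num \<P> n = Max {S_set \<P> V | V. finite V \<and> card V = n}"

end

theory Submission
  imports Defs
begin

text \<open>
  Let \<open>m = k - 1\<close> and cut the sorted \<open>n\<close>-set \<open>V\<close> into \<open>m\<close> blocks of consecutive
  elements, \<open>r\<close> of size \<open>q + 1\<close> and \<open>m - r\<close> of size \<open>q\<close>, where \<open>n = m q + r\<close>.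
  A copy \<open>f(P\<^sub>0)\<close> of \<open>P\<^sub>0 = {a\<^sub>0 < \<dots> < a\<^sub>m}\<close> in \<open>V\<close> has \<open>m + 1\<close> points but only
  \<open>m\<close> blocks to visit, so some consecutive pair \<open>f(a\<^sub>p), f(a\<^sub>p\<^sub>+\<^sub>1)\<close> lies in block \<open>p\<close>.
  That pair determines \<open>p\<close> and hence \<open>f\<close>, so the copies inject into the pairs inside
  blocks, of which there are \<open>r\<cdot>C(q+1,2) + (m-r)\<cdot>C(q,2) = (n-r)(n+r-m)/(2m)\<close>.
\<close>

definition rank :: "'a::linorder set \<Rightarrow> 'a \<Rightarrow> nat" where
  "rank V v = card {w \<in> V. w < v}"

lemma rank_less_card:
  assumes "finite V" "v \<in> V"
  shows "rank V v < card V"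
  unfolding rank_def using assms by (intro psubset_card_mono) auto

lemma rank_strict_mono:
  assumes "finite V" "v \<in> V" "v < w"
  shows "rank V v < rank V w"
  unfolding rank_def using assms by (intro psubset_card_mono) auto

lemma rank_inj_on: "finite V \<Longrightarrow> inj_on (rank V) V"
  by (metis inj_on_def linorder_neq_iff less_irrefl rank_strict_mono)

lemma real_choose_two: "real (c choose 2) = real c * (real c - 1) / 2"
  by (induction c) (auto simp: numeral_2_eq_2 field_simps)

lemma exists_block_crossing:
  fixes lo idx :: "nat \<Rightarrow> nat"
  assumes "lo 0 \<le> idx 0" "idx m < lo m"
  shows "\<exists>p<m. lo p \<le> idx p \<and> idx (Suc p) < lo (Suc p)"
  using assms(2)
proof (induction m)
  case 0
  with assms(1) show ?case by simp
next
  case (Suc m)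
  show ?case
  proof (cases "idx m < lo m")
    case True
    with Suc.IH show ?thesis using less_SucI by blast
  next
    case False
    with Suc.prems show ?thesis by (intro exI[of _ m]) simp
  qed
qed

lemma sorted_enumeration:
  assumes "finite P" "card P = Suc m"
  obtains a :: "nat \<Rightarrow> 'a::linorder" where "strict_mono_on {..m} a" "a ` {..m} \<subseteq> P"
proof
  let ?xs = "sorted_list_of_set P"
  have len: "length ?xs = Suc m" using assms by simp
  show "strict_mono_on {..m} ((!) ?xs)"
    using len by (intro strict_mono_onI sorted_wrt_nth_less[OF strict_sorted_list_of_set]) auto
  show "(!) ?xs ` {..m} \<subseteq> P"
    using len assms(1) by (metis atMost_iff image_subsetI le_imp_less_Suc nth_mem set_sorted_list_of_set)
qed

lemma card_pairs_between:
  "card {(i, j). a \<le> i \<and> i < j \<and> j < b} = (b - a) choose 2"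
proof (induction b)
  case 0
  then show ?case by simp
next
  case (Suc b)
  let ?A = "{(i, j). a \<le> i \<and> i < j \<and> j < b}"
  have "{(i, j). a \<le> i \<and> i < j \<and> j < Suc b} = ?A \<union> (\<lambda>i. (i, b)) ` {a..<b}"
    by auto
  moreover have "finite ?A"
    by (rule finite_subset[of _ "{..<b} \<times> {..<b}"]) auto
  moreover have "?A \<inter> (\<lambda>i. (i, b)) ` {a..<b} = {}"
    by auto
  ultimately have "card {(i, j). a \<le> i \<and> i < j \<and> j < Suc b} = ((b - a) choose 2) + (b - a)"
    using Suc.IH by (simp add: card_Un_disjoint card_image inj_on_def)
  also have "\<dots> = (Suc b - a) choose 2"
    by (cases "a \<le> b") (simp_all add: Suc_diff_le numeral_2_eq_2)
  finally show ?case .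
qed

definition block_pairs :: "(nat \<Rightarrow> nat) \<Rightarrow> nat \<Rightarrow> (nat \<times> nat) set" where
  "block_pairs lo m = {(i, j). \<exists>p<m. lo p \<le> i \<and> i < j \<and> j < lo (Suc p)}"

lemma finite_block_pairs:
  assumes "mono lo"
  shows "finite (block_pairs lo m)"
proof (rule finite_subset)
  show "block_pairs lo m \<subseteq> {..<lo m} \<times> {..<lo m}"
  proof (clarsimp simp: block_pairs_def)
    fix i j p assume "p < m" "i < j" "j < lo (Suc p)"
    moreover have "lo (Suc p) \<le> lo m" using \<open>p < m\<close> by (intro monoD[OF assms]) simp
    ultimately show "i < lo m \<and> j < lo m" by simp
  qed
qed simp

lemma card_block_pairs_le:
  "card (block_pairs lo m) \<le> (\<Sum>p<m. (lo (Suc p) - lo p) choose 2)"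
proof -
  have "block_pairs lo m = (\<Union>p<m. {(i, j). lo p \<le> i \<and> i < j \<and> j < lo (Suc p)})"
    unfolding block_pairs_def by auto
  then show ?thesis
    using card_UN_le[of "{..<m}" "\<lambda>p. {(i, j). lo p \<le> i \<and> i < j \<and> j < lo (Suc p)}"]
    by (simp add: card_pairs_between)
qed

lemma block_index_unique:
  assumes "mono lo" "lo p \<le> i" "i < lo (Suc p)" "lo p' \<le> i" "i < lo (Suc p')"
  shows "p = p'"
  using assms monoD[OF assms(1), of "Suc p" p'] monoD[OF assms(1), of "Suc p'" p]
  by (metis not_less_eq_eq le_less_trans less_le_not_le linorder_neqE_nat)

lemma direct_similarity_strict_mono: "direct_similarity f \<Longrightarrow> strict_mono f"
  unfolding direct_similarity_def strict_mono_def by auto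

lemma direct_similarity_eqI:
  assumes "direct_similarity f" "direct_similarity h" "u \<noteq> w" "f u = h u" "f w = h w"
  shows "f = h"
proof -
  obtain a b where f: "f = (\<lambda>x. a * x + b)"
    using assms(1) unfolding direct_similarity_def by auto
  obtain c d where h: "h = (\<lambda>x. c * x + d)"
    using assms(2) unfolding direct_similarity_def by auto
  have "a * u + b = c * u + d" "a * w + b = c * w + d"
    using assms(4,5) f h by auto
  then have "(a - c) * (w - u) = 0" "a * u + b = c * u + d"
    by (simp_all add: algebra_simps)
  with assms(3) have "a = c" "b = d" by auto
  with f h show ?thesis by simp
qed

lemma S_set_le_card_block_pairs:
  assumes V: "finite V" and lo: "mono lo" "lo 0 = 0" "lo m = card V"
    and a: "strict_mono_on {..m} a" "a ` {..m} \<subseteq> P0"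
  shows "S_set (pattern P0) V \<le> card (block_pairs lo m)"
proof -
  define idx where "idx f t = rank V (f (a t))" for f t
  define copy_pair where "copy_pair P e \<longleftrightarrow> (\<exists>f p. direct_similarity f \<and> P = f ` P0 \<and> p < m
      \<and> e = (idx f p, idx f (Suc p))
      \<and> lo p \<le> idx f p \<and> idx f p < idx f (Suc p) \<and> idx f (Suc p) < lo (Suc p))" for P e
  let ?copies = "{P. P \<subseteq> V \<and> P \<in> pattern P0}"
  have in_V: "g (a t) \<in> V" if "g ` P0 \<subseteq> V" "t \<le> m" for g t
    using that a(2) by auto
  have "card ?copies \<le> card (block_pairs lo m)"
  proof (rule card_le_if_inj_on_rel[where r = copy_pair])
    show "finite (block_pairs lo m)"
      using lo(1) by (rule finite_block_pairs)
  next
    fix P assume "P \<in> ?copies"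
    then obtain f where f: "direct_similarity f" "P = f ` P0" "f ` P0 \<subseteq> V"
      unfolding pattern_def by auto
    have idx_less: "idx f t < idx f (Suc t)" if "t < m" for t
    proof -
      have "a t < a (Suc t)"
        using that by (intro strict_mono_onD[OF a(1)]) auto
      then have "f (a t) < f (a (Suc t))"
        by (rule strict_monoD[OF direct_similarity_strict_mono[OF f(1)]])
      moreover have "f (a t) \<in> V"
        using that f(3) by (intro in_V) auto
      ultimately show ?thesis
        unfolding idx_def by (rule rank_strict_mono[OF V, rotated])
    qed
    have "idx f m < lo m"
      unfolding idx_def lo(3) using f(3) by (intro rank_less_card[OF V] in_V) auto
    then obtain p where p: "p < m" "lo p \<le> idx f p" "idx f (Suc p) < lo (Suc p)"
      using exists_block_crossing[of lo "idx f" m] lo(2) by auto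
    then have "(idx f p, idx f (Suc p)) \<in> block_pairs lo m"
      unfolding block_pairs_def using idx_less[OF p(1)] by auto
    moreover have "copy_pair P (idx f p, idx f (Suc p))"
      unfolding copy_pair_def using f(1,2) p idx_less by blast
    ultimately show "\<exists>e. e \<in> block_pairs lo m \<and> copy_pair P e"
      by blast
  next
    fix P Q e assume PQ: "P \<in> ?copies" "Q \<in> ?copies" "copy_pair P e" "copy_pair Q e"
    obtain f p where f: "direct_similarity f" "P = f ` P0" "p < m" "e = (idx f p, idx f (Suc p))"
        "lo p \<le> idx f p" "idx f p < idx f (Suc p)" "idx f (Suc p) < lo (Suc p)"
      using PQ(3) unfolding copy_pair_def by blast
    obtain h p' where h: "direct_similarity h" "Q = h ` P0" "e = (idx h p', idx h (Suc p'))"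
        "lo p' \<le> idx h p'" "idx h p' < idx h (Suc p')" "idx h (Suc p') < lo (Suc p')"
      using PQ(4) unfolding copy_pair_def by blast
    have "p' = p"
      using f(4-7) h(3-6) by (intro block_index_unique[OF lo(1), of p' "idx f p"]) auto
    have "f ` P0 \<subseteq> V" "h ` P0 \<subseteq> V"
      using PQ(1,2) f(2) h(2) by auto
    moreover have "idx f t = idx h t" if "t \<in> {p, Suc p}" for t
      using that f(4) h(3) \<open>p' = p\<close> by auto
    ultimately have "f (a t) = h (a t)" if "t \<in> {p, Suc p}" for t
      using that f(3) unfolding idx_def by (intro inj_onD[OF rank_inj_on[OF V]] in_V) auto
    moreover have "a p \<noteq> a (Suc p)"
      using strict_mono_onD[OF a(1), of p "Suc p"] f(3) by simp
    ultimately have "f = h"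
      using direct_similarity_eqI[OF f(1) h(1)] by blast
    then show "P = Q"
      using f(2) h(2) by simp
  qed
  then show ?thesis
    unfolding S_set_def .
qed

lemma sum_balanced_blocks_choose_two:
  fixes m q r :: nat
  assumes "r < m"
  shows "real (\<Sum>p<m. ((Suc p * q + min (Suc p) r) - (p * q + min p r)) choose 2)
    = (real (m * q + r) - r) * (real (m * q + r) + r - m) / (2 * m)"
proof -
  let ?block = "\<lambda>p. (Suc p * q + min (Suc p) r) - (p * q + min p r)"
  have "{..<m} = {..<r} \<union> {r..<m}"
    using assms by auto
  then have "(\<Sum>p<m. ?block p choose 2) = (\<Sum>p<r. ?block p choose 2) + (\<Sum>p\<in>{r..<m}. ?block p choose 2)"
    by (simp only: sum.union_disjoint[of "{..<r}" "{r..<m}"] finite_lessThan finite_atLeastLessThan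
        ivl_disj_int_one(2))
  also have "\<dots> = (\<Sum>p<r. Suc q choose 2) + (\<Sum>p\<in>{r..<m}. q choose 2)"
    by (intro arg_cong2[where f = "(+)"] sum.cong) auto
  also have "\<dots> = r * (Suc q choose 2) + (m - r) * (q choose 2)"
    by simp
  finally have "real (\<Sum>p<m. ?block p choose 2)
      = real r * (real (Suc q) * real q / 2) + (real m - real r) * (real q * (real q - 1) / 2)"
    using assms by (simp add: real_choose_two of_nat_diff)
  also have "\<dots> = (real (m * q + r) - r) * (real (m * q + r) + r - m) / (2 * m)"
    using assms by (simp add: field_simps)
  finally show ?thesis .
qed

lemma S_num_le:
  assumes "\<And>V. finite V \<Longrightarrow> card V = n \<Longrightarrow> S_set \<P> V \<le> N"
  shows "S_num \<P> n \<le> N"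
proof -
  let ?A = "{S_set \<P> V |V. finite V \<and> card V = n}"
  have "S_set \<P> (real ` {..<n}) \<in> ?A"
    by (force simp: card_image)
  moreover have "?A \<subseteq> {..N}"
    using assms by auto
  ultimately show ?thesis
    unfolding S_num_def by (intro Max.boundedI) (auto intro: finite_subset[OF _ finite_atMost])
qed

theorem mainTheorem5:
  fixes P0 :: "real set" and k n :: nat
  assumes "finite P0" and "card P0 = k" and "k > 1" and "n > 0"
  shows "real (S_num (pattern P0) n)
           \<le> (real n - real (n mod (k - 1))) * (real n + real (n mod (k - 1)) - real k + 1)
             / (2 * real k - 2)"
proof -
  define m where "m = k - 1"
  define q where "q = n div m"
  define r where "r = n mod m"
  define lo where "lo p = p * q + min p r" for p
  have "m > 0" "card P0 = Suc m"
    using assms(2,3) unfolding m_def by auto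
  then have "r < m" and n: "n = m * q + r"
    unfolding q_def r_def by simp_all
  obtain a where a: "strict_mono_on {..m} a" "a ` {..m} \<subseteq> P0"
    using sorted_enumeration[OF assms(1) \<open>card P0 = Suc m\<close>] .
  have "mono lo" "lo 0 = 0" "lo m = n"
    unfolding lo_def n using \<open>r < m\<close> by (auto intro!: monoI add_mono)
  then have "S_num (pattern P0) n \<le> (\<Sum>p<m. (lo (Suc p) - lo p) choose 2)"
    using S_set_le_card_block_pairs[OF _ _ _ _ a] card_block_pairs_le
    by (intro S_num_le) (metis le_trans)
  also have "real \<dots> = (real n - r) * (real n + r - m) / (2 * m)"
    unfolding lo_def n using \<open>r < m\<close> by (rule sum_balanced_blocks_choose_two)
  also have "\<dots> = (real n - r) * (real n + r - real k + 1) / (2 * real k - 2)"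
    using assms(3) unfolding m_def by (simp add: of_nat_diff algebra_simps)
  finally show ?thesis
    unfolding r_def m_def by simp
qed

end
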